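(* Let $G=(N,S,(u_i)_{i\in N})$ be a game with solution set $D\subseteq S$, and let $\alpha,\beta\ge1$. If over $D$ the utility of every player is $\beta$ varied and $\alpha$-lower dependent on coordination, then $\mathrm{PoTA}\ge \mathrm{PoA}/(\alpha\beta)$. If over $D$ the utility of every player is $\beta$ varied and $\alpha$-upper dependent on coordination, then $\mathrm{PoTS}\le\alpha\beta\,\mathrm{PoS}$.
   Context: $T(D)$ is the set of transitions: profiles $t$ such that for every $i$ there is $d\in D$ with $t_i=d_i$. $\mathrm{sw}(s)=\sum_iu_i(s)$, assumed to have positive maximum over $S$; minima/maxima are read as infima/suprema if not attained. $\mathrm{PoA}=\min_{D}\mathrm{sw}/\max_S\mathrm{sw}$, $\mathrm{PoS}=\max_D\mathrm{sw}/\max_S\mathrm{sw}$, $\mathrm{PoTA}=\min_{T(D)}\mathrm{sw}/\max_S\mathrm{sw}$, $\mathrm{PoTS}=\max_{T(D)}\mathrm{sw}/\max_S\mathrm{sw}$. Player $i$'s utility over $A\subseteq S$ is $\alpha$-lower dependent on coordination if $\min_{s\in T(A)}u_i(s)\ge\min_{t\in A}u_i(t)/\alpha$, and $\alpha$-upper dependent on coordination if $\max_{s\in T(A)}u_i(s)\le\alpha\max_{t\in A}u_i(t)$. Player $i$'s utility is $\beta$ varied over $A$ if for all $s,t\in A$, $\mathrm{sw}(s)\ge\mathrm{sw}(t)\Rightarrow u_i(s)\ge u_i(t)/\beta$. *)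

theory Defs
  imports "HOL-Library.Extended_Real" "HOL-Library.FuncSet"
begin

(* A game: finite player set N, strategy sets Si i, profiles S = PiE N Si,
   utilities u i s (real). Min/max over possibly infinite sets are read as
   Inf/Sup in the extended reals. *)

definition transitions :: "'i set \<Rightarrow> ('i \<Rightarrow> 's) set \<Rightarrow> ('i \<Rightarrow> 's) set" where
  "transitions N D = {t \<in> extensional N. \<forall>i\<in>N. \<exists>d\<in>D. t i = d i}"

definition sw :: "'i set \<Rightarrow> ('i \<Rightarrow> ('i \<Rightarrow> 's) \<Rightarrow> real) \<Rightarrow> ('i \<Rightarrow> 's) \<Rightarrow> real" where
  "sw N u s = (\<Sum>i\<in>N. u i s)"

definition opt_sw :: "'i set \<Rightarrow> ('i \<Rightarrow> 's set) \<Rightarrow> ('i \<Rightarrow> ('i \<Rightarrow> 's) \<Rightarrow> real) \<Rightarrow> ereal" where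
  "opt_sw N Si u = (SUP s\<in>PiE N Si. ereal (sw N u s))"

definition PoA where
  "PoA N Si u D = (INF s\<in>D. ereal (sw N u s)) / opt_sw N Si u"

definition PoS where
  "PoS N Si u D = (SUP s\<in>D. ereal (sw N u s)) / opt_sw N Si u"

definition PoTA where
  "PoTA N Si u D = (INF s\<in>transitions N D. ereal (sw N u s)) / opt_sw N Si u"

definition PoTS where
  "PoTS N Si u D = (SUP s\<in>transitions N D. ereal (sw N u s)) / opt_sw N Si u"

definition lower_dep ::
  "'i set \<Rightarrow> ('i \<Rightarrow> ('i \<Rightarrow> 's) \<Rightarrow> real) \<Rightarrow> real \<Rightarrow> 'i \<Rightarrow> ('i \<Rightarrow> 's) set \<Rightarrow> bool" where
  "lower_dep N u \<alpha> i A \<longleftrightarrow>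
     (INF s\<in>transitions N A. ereal (u i s)) \<ge> (INF t\<in>A. ereal (u i t)) / ereal \<alpha>"

definition upper_dep ::
  "'i set \<Rightarrow> ('i \<Rightarrow> ('i \<Rightarrow> 's) \<Rightarrow> real) \<Rightarrow> real \<Rightarrow> 'i \<Rightarrow> ('i \<Rightarrow> 's) set \<Rightarrow> bool" where
  "upper_dep N u \<alpha> i A \<longleftrightarrow>
     (SUP s\<in>transitions N A. ereal (u i s)) \<le> ereal \<alpha> * (SUP t\<in>A. ereal (u i t))"

definition varied ::
  "'i set \<Rightarrow> ('i \<Rightarrow> ('i \<Rightarrow> 's) \<Rightarrow> real) \<Rightarrow> real \<Rightarrow> 'i \<Rightarrow> ('i \<Rightarrow> 's) set \<Rightarrow> bool" where
  "varied N u \<beta> i A \<longleftrightarrow>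
     (\<forall>s\<in>A. \<forall>t\<in>A. sw N u s \<ge> sw N u t \<longrightarrow> u i s \<ge> u i t / \<beta>)"

end

theory Submission
  imports Defs
begin

(* Fix a transition t. In the lower case each player i has, up to epsilon, a solution d_i in D
   with u_i(d_i) <= alpha * u_i(t). Among the finitely many d_i take the one of least welfare,
   d_j; beta-variedness gives u_i(d_j) <= beta * u_i(d_i) for every i, so summing over the
   players sw(d_j) <= beta * sum_i u_i(d_i) <= alpha * beta * sw(t). Hence the worst welfare
   over D is at most alpha * beta times the worst over the transitions. The upper case is
   dual: d_i with u_i(t) <= alpha * u_i(d_i), and d_j of greatest welfare. *)

lemma varied_obtain_sw_le_sum:
  fixes u :: "'i \<Rightarrow> ('i \<Rightarrow> 's) \<Rightarrow> real"
  assumes "finite N" "N \<noteq> {}" and varied: "\<forall>i\<in>N. varied N u \<beta> i D" and f: "f ` N \<subseteq> D"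
  obtains j where "j \<in> N" "sw N u (f j) / \<beta> \<le> (\<Sum>i\<in>N. u i (f i))"
proof -
  define j where "j = arg_min_on (\<lambda>k. sw N u (f k)) N"
  have j: "j \<in> N" "\<And>k. k \<in> N \<Longrightarrow> sw N u (f j) \<le> sw N u (f k)"
    unfolding j_def using assms(1,2) by (rule arg_min_if_finite(1), rule arg_min_least)
  have "u i (f j) / \<beta> \<le> u i (f i)" if "i \<in> N" for i
  proof -
    have "f i \<in> D" "f j \<in> D" using f that j(1) by auto
    then show ?thesis using varied that j(2)[OF that] unfolding varied_def by simp
  qed
  then have "sw N u (f j) / \<beta> \<le> (\<Sum>i\<in>N. u i (f i))"
    unfolding sw_def sum_divide_distrib by (rule sum_mono)
  with j(1) show thesis by (rule that)
qed

lemma varied_obtain_sum_le_sw: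
  fixes u :: "'i \<Rightarrow> ('i \<Rightarrow> 's) \<Rightarrow> real"
  assumes "finite N" "N \<noteq> {}" and varied: "\<forall>i\<in>N. varied N u \<beta> i D" and f: "f ` N \<subseteq> D"
  obtains j where "j \<in> N" "(\<Sum>i\<in>N. u i (f i)) / \<beta> \<le> sw N u (f j)"
proof -
  define j where "j = arg_min_on (\<lambda>k. - sw N u (f k)) N"
  have j: "j \<in> N" "\<And>k. k \<in> N \<Longrightarrow> - sw N u (f j) \<le> - sw N u (f k)"
    unfolding j_def using assms(1,2) by (rule arg_min_if_finite(1), rule arg_min_least)
  have "u i (f i) / \<beta> \<le> u i (f j)" if "i \<in> N" for i
  proof -
    have "f i \<in> D" "f j \<in> D" using f that j(1) by auto
    then show ?thesis using varied that j(2)[OF that] unfolding varied_def by simp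
  qed
  then have "(\<Sum>i\<in>N. u i (f i)) / \<beta> \<le> sw N u (f j)"
    unfolding sw_def sum_divide_distrib by (rule sum_mono)
  with j(1) show thesis by (rule that)
qed

lemma varied_INF_sw_le:
  fixes u :: "'i \<Rightarrow> ('i \<Rightarrow> 's) \<Rightarrow> real"
  assumes fin: "finite N" and ne: "N \<noteq> {}" and varied: "\<forall>i\<in>N. varied N u \<beta> i D"
    and "0 < \<beta>" and bound: "\<And>i. i \<in> N \<Longrightarrow> (INF d\<in>D. ereal (u i d)) \<le> ereal (c i)"
  shows "(INF d\<in>D. ereal (sw N u d)) \<le> ereal (\<beta> * (\<Sum>i\<in>N. c i))"
proof (rule ereal_le_epsilon2)
  fix e :: real assume "0 < e"
  define \<delta> where "\<delta> = e / (\<beta> * card N)"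
  have "0 < \<delta>" and \<delta>: "\<beta> * (card N * \<delta>) = e"
    using \<open>0 < e\<close> \<open>0 < \<beta>\<close> fin ne by (simp_all add: \<delta>_def card_gt_0_iff)
  have "\<exists>d\<in>D. u i d < c i + \<delta>" if "i \<in> N" for i
  proof -
    have "(INF d\<in>D. ereal (u i d)) < ereal (c i + \<delta>)"
      by (rule le_less_trans[OF bound[OF that]]) (use \<open>0 < \<delta>\<close> in simp)
    then show ?thesis by (simp add: INF_less_iff)
  qed
  then obtain f where f: "\<And>i. i \<in> N \<Longrightarrow> f i \<in> D \<and> u i (f i) < c i + \<delta>"
    by metis
  obtain j where "j \<in> N" and j: "sw N u (f j) / \<beta> \<le> (\<Sum>i\<in>N. u i (f i))"
    using varied_obtain_sw_le_sum[OF fin ne varied] f by blast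
  have "sw N u (f j) \<le> \<beta> * (\<Sum>i\<in>N. u i (f i))"
    using j \<open>0 < \<beta>\<close> by (simp add: field_simps)
  also have "\<dots> \<le> \<beta> * (\<Sum>i\<in>N. c i + \<delta>)"
    using f \<open>0 < \<beta>\<close> by (intro mult_left_mono sum_mono) (auto intro: less_imp_le)
  also have "\<dots> = \<beta> * (\<Sum>i\<in>N. c i) + e"
    using \<delta> by (simp add: sum.distrib algebra_simps)
  finally have "ereal (sw N u (f j)) \<le> ereal (\<beta> * (\<Sum>i\<in>N. c i)) + ereal e"
    by simp
  moreover have "(INF d\<in>D. ereal (sw N u d)) \<le> ereal (sw N u (f j))"
    using f[OF \<open>j \<in> N\<close>] by (intro INF_lower) simp
  ultimately show "(INF d\<in>D. ereal (sw N u d)) \<le> ereal (\<beta> * (\<Sum>i\<in>N. c i)) + ereal e"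
    by (rule order_trans[rotated])
qed

lemma varied_sum_le_SUP_sw:
  fixes u :: "'i \<Rightarrow> ('i \<Rightarrow> 's) \<Rightarrow> real"
  assumes fin: "finite N" and ne: "N \<noteq> {}" and varied: "\<forall>i\<in>N. varied N u \<beta> i D"
    and "0 < \<beta>" and bound: "\<And>i. i \<in> N \<Longrightarrow> ereal (c i) \<le> (SUP d\<in>D. ereal (u i d))"
  shows "ereal (\<Sum>i\<in>N. c i) \<le> ereal \<beta> * (SUP d\<in>D. ereal (sw N u d))"
proof (rule ereal_le_epsilon2)
  fix e :: real assume "0 < e"
  define \<delta> where "\<delta> = e / card N"
  have "0 < \<delta>" and \<delta>: "card N * \<delta> = e"
    using \<open>0 < e\<close> fin ne by (simp_all add: \<delta>_def card_gt_0_iff)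
  have "\<exists>d\<in>D. c i - \<delta> < u i d" if "i \<in> N" for i
  proof -
    have "ereal (c i - \<delta>) < (SUP d\<in>D. ereal (u i d))"
      by (rule less_le_trans[OF _ bound[OF that]]) (use \<open>0 < \<delta>\<close> in simp)
    then show ?thesis by (simp add: less_SUP_iff)
  qed
  then obtain f where f: "\<And>i. i \<in> N \<Longrightarrow> f i \<in> D \<and> c i - \<delta> < u i (f i)"
    by metis
  obtain j where "j \<in> N" and j: "(\<Sum>i\<in>N. u i (f i)) / \<beta> \<le> sw N u (f j)"
    using varied_obtain_sum_le_sw[OF fin ne varied] f by blast
  have "(\<Sum>i\<in>N. c i) - e = (\<Sum>i\<in>N. c i - \<delta>)"
    using \<delta> by (simp add: sum_subtractf)
  also have "\<dots> \<le> (\<Sum>i\<in>N. u i (f i))"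
    using f by (intro sum_mono) (auto intro: less_imp_le)
  also have "\<dots> \<le> \<beta> * sw N u (f j)"
    using j \<open>0 < \<beta>\<close> by (simp add: field_simps)
  finally have "ereal (\<Sum>i\<in>N. c i) \<le> ereal \<beta> * ereal (sw N u (f j)) + ereal e"
    by simp
  also have "\<dots> \<le> ereal \<beta> * (SUP d\<in>D. ereal (sw N u d)) + ereal e"
    using f[OF \<open>j \<in> N\<close>] \<open>0 < \<beta>\<close>
    by (intro add_right_mono ereal_mult_left_mono SUP_upper) simp_all
  finally show "ereal (\<Sum>i\<in>N. c i) \<le> ereal \<beta> * (SUP d\<in>D. ereal (sw N u d)) + ereal e" .
qed

lemma lower_dep_INF_le:
  assumes "lower_dep N u \<alpha> i D" and "0 < \<alpha>" and "t \<in> transitions N D"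
  shows "(INF d\<in>D. ereal (u i d)) \<le> ereal (\<alpha> * u i t)"
proof -
  have "(INF d\<in>D. ereal (u i d)) / ereal \<alpha> \<le> ereal (u i t)"
    using assms(1) INF_lower[OF assms(3)] unfolding lower_dep_def by (rule order_trans)
  then show ?thesis
    using assms(2) by (simp add: ereal_divide_le_pos)
qed

lemma upper_dep_le_SUP:
  assumes "upper_dep N u \<alpha> i D" and "0 < \<alpha>" and "t \<in> transitions N D"
  shows "ereal (u i t / \<alpha>) \<le> (SUP d\<in>D. ereal (u i d))"
proof -
  have "ereal (u i t) \<le> ereal \<alpha> * (SUP d\<in>D. ereal (u i d))"
    using SUP_upper[OF assms(3)] assms(1) unfolding upper_dep_def by (rule order_trans)
  then show ?thesis
    using assms(2) ereal_divide_le_pos[of "ereal \<alpha>" "ereal (u i t)"] by simp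
qed

lemma INF_sw_le_INF_sw_transitions:
  fixes u :: "'i \<Rightarrow> ('i \<Rightarrow> 's) \<Rightarrow> real"
  assumes "finite N" and "N \<noteq> {}" and "0 < \<alpha>" and "0 < \<beta>"
    and "\<forall>i\<in>N. varied N u \<beta> i D \<and> lower_dep N u \<alpha> i D"
  shows "(INF d\<in>D. ereal (sw N u d)) / ereal (\<alpha> * \<beta>) \<le> (INF t\<in>transitions N D. ereal (sw N u t))"
proof (rule INF_greatest)
  fix t assume t: "t \<in> transitions N D"
  have "(INF d\<in>D. ereal (sw N u d)) \<le> ereal (\<beta> * (\<Sum>i\<in>N. \<alpha> * u i t))"
    using assms by (intro varied_INF_sw_le lower_dep_INF_le[OF _ _ t]) auto
  also have "\<dots> = ereal (\<alpha> * \<beta>) * ereal (sw N u t)"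
    by (simp add: sw_def sum_distrib_left mult_ac)
  finally show "(INF d\<in>D. ereal (sw N u d)) / ereal (\<alpha> * \<beta>) \<le> ereal (sw N u t)"
    using assms(3,4) by (simp add: ereal_divide_le_pos)
qed

lemma SUP_sw_transitions_le_SUP_sw:
  fixes u :: "'i \<Rightarrow> ('i \<Rightarrow> 's) \<Rightarrow> real"
  assumes "finite N" and "N \<noteq> {}" and "0 < \<alpha>" and "0 < \<beta>"
    and "\<forall>i\<in>N. varied N u \<beta> i D \<and> upper_dep N u \<alpha> i D"
  shows "(SUP t\<in>transitions N D. ereal (sw N u t)) \<le> ereal (\<alpha> * \<beta>) * (SUP d\<in>D. ereal (sw N u d))"
proof (rule SUP_least)
  fix t assume t: "t \<in> transitions N D"
  have "ereal (\<Sum>i\<in>N. u i t / \<alpha>) \<le> ereal \<beta> * (SUP d\<in>D. ereal (sw N u d))"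
    using assms by (intro varied_sum_le_SUP_sw upper_dep_le_SUP[OF _ _ t]) auto
  then have "ereal \<alpha> * ereal (sw N u t / \<alpha>) \<le> ereal \<alpha> * (ereal \<beta> * (SUP d\<in>D. ereal (sw N u d)))"
    using assms(3) by (intro ereal_mult_left_mono) (simp_all add: sw_def sum_divide_distrib)
  then show "ereal (sw N u t) \<le> ereal (\<alpha> * \<beta>) * (SUP d\<in>D. ereal (sw N u d))"
    using assms(3) by (simp add: mult.assoc[symmetric])
qed

theorem proposition1:
  fixes N :: "'i set" and Si :: "'i \<Rightarrow> 's set"
    and u :: "'i \<Rightarrow> ('i \<Rightarrow> 's) \<Rightarrow> real"
    and D :: "('i \<Rightarrow> 's) set" and \<alpha> \<beta> :: real
  assumes "finite N"
    and "D \<subseteq> PiE N Si"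
    and "0 < opt_sw N Si u" and "opt_sw N Si u < \<infinity>"
    and "\<alpha> \<ge> 1" and "\<beta> \<ge> 1"
  shows "((\<forall>i\<in>N. varied N u \<beta> i D \<and> lower_dep N u \<alpha> i D)
           \<longrightarrow> PoTA N Si u D \<ge> PoA N Si u D / ereal (\<alpha> * \<beta>))
       \<and> ((\<forall>i\<in>N. varied N u \<beta> i D \<and> upper_dep N u \<alpha> i D)
           \<longrightarrow> PoTS N Si u D \<le> ereal (\<alpha> * \<beta>) * PoS N Si u D)"
proof -
  have setting: "finite N" "N \<noteq> {}" "0 < \<alpha>" "0 < \<beta>"
    using assms(1,3,5,6) by (auto simp: opt_sw_def sw_def)
  show ?thesis
  proof (intro conjI impI)
    assume "\<forall>i\<in>N. varied N u \<beta> i D \<and> lower_dep N u \<alpha> i D"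
    note transitions_bound = INF_sw_le_INF_sw_transitions[OF setting this]
    have "PoA N Si u D / ereal (\<alpha> * \<beta>)
        = (INF d\<in>D. ereal (sw N u d)) / ereal (\<alpha> * \<beta>) / opt_sw N Si u"
      unfolding PoA_def divide_ereal_def by (simp add: ac_simps)
    also have "\<dots> \<le> PoTA N Si u D"
      unfolding PoTA_def using transitions_bound assms(3) by (rule ereal_divide_right_mono)
    finally show "PoA N Si u D / ereal (\<alpha> * \<beta>) \<le> PoTA N Si u D" .
  next
    assume "\<forall>i\<in>N. varied N u \<beta> i D \<and> upper_dep N u \<alpha> i D"
    note transitions_bound = SUP_sw_transitions_le_SUP_sw[OF setting this]
    have "PoTS N Si u D
        \<le> ereal (\<alpha> * \<beta>) * (SUP d\<in>D. ereal (sw N u d)) / opt_sw N Si u"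
      unfolding PoTS_def using transitions_bound assms(3) by (rule ereal_divide_right_mono)
    also have "\<dots> = ereal (\<alpha> * \<beta>) * PoS N Si u D"
      unfolding PoS_def divide_ereal_def by (simp add: ac_simps)
    finally show "PoTS N Si u D \<le> ereal (\<alpha> * \<beta>) * PoS N Si u D" .
  qed
qed

end
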